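(* Let $m\ge 2$ and consider the system $$\frac{du_i}{dt}=-a_iu_i+\sum_{j=1}^m w_{ij}f_j(u_j)+k\,\varphi_i(\rho)\,u_i+J_i-P\,u_i\sum_{j=1}^m\Gamma(u_j),\quad 1\le i\le m,\qquad \frac{d\rho}{dt}=\sum_{i=1}^m\gamma_iu_i-b\rho,$$ where $\Gamma(s)=\dfrac{1}{1+\exp[-r(s-V)]}$ with $r>0$, $V\in\mathbb{R}$, $P>0$; $a_i,b,\beta,\eta_i,k>0$; $w_{ij},J_i,\gamma_i\in\mathbb{R}$; $f_i,\varphi_i$ locally Lipschitz with $a_i>k$, $|f_i(s)|\le\beta$, $\varphi_i(s)=1-\eta_is^2$ for all $s\in\mathbb{R}$, $1\le i\le m$. Let $\{S(t)\}_{t\ge0}$ be the solution semiflow on $\mathbb{R}^{m+1}$, $S(t)g^0=g(t;g^0)$, with norm $\|g\|^2=\sum_{i=1}^m u_i^2+\rho^2$. Set $a=\min_i a_i$, $W=\max_{i,j}|w_{ij}|$, $J=\max_i|J_i|$, $\gamma^2=\max_i\gamma_i^2$, $$C_1=\frac{1}{a-k}\Big(\frac{m\gamma^2}{b}+b\Big),\quad C_2=\Big(\frac{m\gamma^2}{b}+b\Big)\frac{m(mW\beta+J)^2}{(a-k)^2},\quad \mu=b\min\Big\{\frac1{C_1},1\Big\},\quad Q=1+\frac{C_2}{\mu\min\{C_1,1\}}.$$ Then the ball $B^*=\{g\in\mathbb{R}^{m+1}:\|g\|^2\le Q\}$ is an absorbing set for $\{S(t)\}_{t\ge0}$: for every bounded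 set $B\subset\mathbb{R}^{m+1}$ there is a finite $T_B\ge0$ with $S(t)B\subset B^*$ for all $t>T_B$. Moreover, this semiflow has a global attractor.
   Context: The constant $Q$ is independent of the initial state. A global attractor is a compact invariant set attracting all bounded sets; here it is the $\Omega$-limit set of $B^*$. *)

theory Defs
  imports "HOL-Analysis.Analysis"
begin

definition Gam :: "real \<Rightarrow> real \<Rightarrow> real \<Rightarrow> real" where
  "Gam r V s = 1 / (1 + exp (- r * (s - V)))"

definition loc_lipschitz :: "(real \<Rightarrow> real) \<Rightarrow> bool" where
  "loc_lipschitz h \<longleftrightarrow>
     (\<forall>x. \<exists>e>0. \<exists>L. \<forall>y\<in>cball x e. \<forall>z\<in>cball x e. \<bar>h y - h z\<bar> \<le> L * \<bar>y - z\<bar>)"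

text \<open>The vector field of the system on R^(m+1) = (real^'n) x real, m = CARD('n).
  State g = (u, rho).\<close>
definition nn_field ::
  "real^'n \<Rightarrow> real^'n^'n \<Rightarrow> ('n::finite \<Rightarrow> real \<Rightarrow> real) \<Rightarrow> real \<Rightarrow>
   ('n \<Rightarrow> real \<Rightarrow> real) \<Rightarrow> real^'n \<Rightarrow> real \<Rightarrow> real \<Rightarrow> real \<Rightarrow> real^'n \<Rightarrow> real \<Rightarrow>
   (real^'n) \<times> real \<Rightarrow> (real^'n) \<times> real" where
  "nn_field a w f k \<phi> J P r V \<gamma> b g =
    (let u = fst g; \<rho> = snd g in
     ((\<chi> i. - a$i * u$i + (\<Sum>j\<in>UNIV. w$i$j * f j (u$j)) + k * \<phi> i \<rho> * u$i + J$i
             - P * u$i * (\<Sum>j\<in>UNIV. Gam r V (u$j))),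
      (\<Sum>i\<in>UNIV. \<gamma>$i * u$i) - b * \<rho>))"

definition is_solution ::
  "('a::real_normed_vector \<Rightarrow> 'a) \<Rightarrow> 'a \<Rightarrow> (real \<Rightarrow> 'a) \<Rightarrow> bool" where
  "is_solution F x0 g \<longleftrightarrow> g 0 = x0 \<and>
     (\<forall>t\<ge>0. (g has_vector_derivative F (g t)) (at t within {0..}))"

definition semiflow :: "('a::real_normed_vector \<Rightarrow> 'a) \<Rightarrow> real \<Rightarrow> 'a \<Rightarrow> 'a" where
  "semiflow F t x0 = (THE y. \<exists>g. is_solution F x0 g \<and> g t = y)"

definition global_attractor :: "(real \<Rightarrow> 'a::metric_space \<Rightarrow> 'a) \<Rightarrow> 'a set \<Rightarrow> bool" where
  "global_attractor S A \<longleftrightarrow> A \<noteq> {} \<and> compact A \<and> (\<forall>t\<ge>0. S t ` A = A) \<and>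
     (\<forall>B. bounded B \<longrightarrow>
        (\<forall>e>0. \<exists>T\<ge>0. \<forall>t\<ge>T. \<forall>x\<in>B. infdist (S t x) A < e))"

end

theory Submission
  imports Defs
begin

(*
  With the Lyapunov function Z(u, rho) = C1 |u|^2 + rho^2 the field is dissipative:
  k phi_i(rho) u_i^2 <= k u_i^2 and -P u_i^2 sum_j Gamma(u_j) <= 0, so the linear damping
  -(a - k) |u|^2 and -b rho^2 dominate, and Young's inequality absorbs the bounded inputs
  sum_j w_ij f_j(u_j) + J_i and the coupling sum_i gamma_i u_i; this gives Z' <= -mu Z + C2.
  Hence Z(g(t)) <= exp(-mu t) Z(g(0)) + C2 / mu along solutions. Solutions therefore stay
  bounded, so the field, which is Lipschitz on bounded sets, generates a global semiflow
  (Picard iteration for the field truncated outside a large ball, Gronwall for uniqueness),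
  and since min(C1, 1) |g|^2 <= Z(g), every bounded set is eventually inside B*.
  The semiflow is continuous and has a bounded absorbing set with bounded forward orbit, so
  the omega-limit set of that absorbing set is compact, invariant and attracts bounded sets.
*)

section \<open>Maps that are Lipschitz on bounded sets\<close>

definition lipschitz_on_balls :: "('a::real_normed_vector \<Rightarrow> 'b::metric_space) \<Rightarrow> bool" where
  "lipschitz_on_balls h \<longleftrightarrow> (\<forall>R. \<exists>L. L-lipschitz_on (cball 0 R) h)"

lemma lipschitz_on_ballsI: "(\<And>R. \<exists>L. L-lipschitz_on (cball 0 R) h) \<Longrightarrow> lipschitz_on_balls h"
  by (simp add: lipschitz_on_balls_def)

lemma lipschitz_on_ballsE:
  assumes "lipschitz_on_balls h"
  obtains L where "L-lipschitz_on (cball 0 R) h"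
  using assms by (auto simp: lipschitz_on_balls_def)

lemma lipschitz_on_balls_bounded_image:
  assumes "lipschitz_on_balls h"
  shows "bounded (h ` cball 0 R)"
proof -
  obtain L where L: "L-lipschitz_on (cball 0 R) h"
    using assms by (rule lipschitz_on_ballsE)
  have "dist (h 0) (h x) \<le> L * R" if x: "x \<in> cball 0 R" for x
  proof -
    have "dist (h 0) (h x) \<le> L * dist 0 x"
      using x by (intro lipschitz_onD[OF L]) (auto dest: order_trans[OF norm_ge_zero])
    also have "\<dots> \<le> L * R"
      using x lipschitz_on_nonneg[OF L] by (intro mult_left_mono) auto
    finally show ?thesis .
  qed
  then show ?thesis
    unfolding bounded_def by blast
qed

lemma lipschitz_on_balls_const: "lipschitz_on_balls (\<lambda>x. c)"
  by (blast intro: lipschitz_on_ballsI lipschitz_on_constant)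

lemma lipschitz_on_balls_bounded_linear: "bounded_linear h \<Longrightarrow> lipschitz_on_balls h"
  by (blast intro: lipschitz_on_ballsI bounded_linear.lipschitz_boundE)

lemma lipschitz_on_balls_add:
  fixes f g :: "'a::real_normed_vector \<Rightarrow> 'b::real_normed_vector"
  assumes f: "lipschitz_on_balls f" and g: "lipschitz_on_balls g"
  shows "lipschitz_on_balls (\<lambda>x. f x + g x)"
proof (rule lipschitz_on_ballsI)
  fix R
  obtain C D where "C-lipschitz_on (cball 0 R) f" "D-lipschitz_on (cball 0 R) g"
    using lipschitz_on_ballsE[OF f] lipschitz_on_ballsE[OF g] by metis
  then show "\<exists>L. L-lipschitz_on (cball 0 R) (\<lambda>x. f x + g x)"
    by (blast intro: lipschitz_on_add)
qed

lemma lipschitz_on_balls_minus: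
  fixes f :: "'a::real_normed_vector \<Rightarrow> 'b::real_normed_vector"
  shows "lipschitz_on_balls f \<Longrightarrow> lipschitz_on_balls (\<lambda>x. - f x)"
  by (simp add: lipschitz_on_balls_def)

lemma lipschitz_on_balls_diff:
  fixes f g :: "'a::real_normed_vector \<Rightarrow> 'b::real_normed_vector"
  shows "lipschitz_on_balls f \<Longrightarrow> lipschitz_on_balls g \<Longrightarrow> lipschitz_on_balls (\<lambda>x. f x - g x)"
  using lipschitz_on_balls_add[of f "\<lambda>x. - g x"] lipschitz_on_balls_minus[of g] by simp

lemma lipschitz_on_balls_Pair:
  assumes f: "lipschitz_on_balls f" and g: "lipschitz_on_balls g"
  shows "lipschitz_on_balls (\<lambda>x. (f x, g x))"
proof (rule lipschitz_on_ballsI)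
  fix R
  obtain C D where "C-lipschitz_on (cball 0 R) f" "D-lipschitz_on (cball 0 R) g"
    using lipschitz_on_ballsE[OF f] lipschitz_on_ballsE[OF g] by metis
  then show "\<exists>L. L-lipschitz_on (cball 0 R) (\<lambda>x. (f x, g x))"
    by (blast intro: lipschitz_on_Pair)
qed

lemma lipschitz_on_balls_compose:
  assumes g: "lipschitz_on_balls g" and h: "lipschitz_on_balls h"
  shows "lipschitz_on_balls (\<lambda>x. g (h x))"
proof (rule lipschitz_on_ballsI)
  fix R
  obtain M where M: "h ` cball 0 R \<subseteq> cball 0 M"
    using lipschitz_on_balls_bounded_image[OF h] by (meson bounded_subset_ballD ball_subset_cball order_trans)
  obtain C D where "C-lipschitz_on (cball 0 R) h" "D-lipschitz_on (cball 0 M) g"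
    using lipschitz_on_ballsE[OF h] lipschitz_on_ballsE[OF g] by metis
  then show "\<exists>L. L-lipschitz_on (cball 0 R) (\<lambda>x. g (h x))"
    using M by (blast intro: lipschitz_on_compose2 lipschitz_on_subset)
qed

lemma lipschitz_on_mult:
  fixes f g :: "'a::metric_space \<Rightarrow> 'b::real_normed_algebra"
  assumes f: "L-lipschitz_on S f" and g: "M-lipschitz_on S g"
    and "bounded (f ` S)" "bounded (g ` S)"
  shows "\<exists>K. K-lipschitz_on S (\<lambda>x. f x * g x)"
proof -
  obtain A B where A: "A > 0" "\<And>x. x \<in> S \<Longrightarrow> norm (f x) \<le> A"
    and B: "B > 0" "\<And>x. x \<in> S \<Longrightarrow> norm (g x) \<le> B"
    using assms(3,4) unfolding bounded_pos by auto
  have "(A * M + B * L)-lipschitz_on S (\<lambda>x. f x * g x)"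
  proof (rule lipschitz_onI)
    fix x y assume xy: "x \<in> S" "y \<in> S"
    have "dist (f x * g x) (f y * g y) = norm (f x * (g x - g y) + (f x - f y) * g y)"
      by (simp add: dist_norm algebra_simps)
    also have "\<dots> \<le> norm (f x) * norm (g x - g y) + norm (f x - f y) * norm (g y)"
      by (intro order_trans[OF norm_triangle_ineq] add_mono norm_mult_ineq)
    also have "\<dots> \<le> A * (M * dist x y) + (L * dist x y) * B"
      using xy lipschitz_onD[OF f xy] lipschitz_onD[OF g xy] A B lipschitz_on_nonneg[OF f]
      by (intro add_mono mult_mono) (auto simp: dist_norm)
    finally show "dist (f x * g x) (f y * g y) \<le> (A * M + B * L) * dist x y"
      by (simp add: algebra_simps)
  next
    show "0 \<le> A * M + B * L"
      using A B lipschitz_on_nonneg[OF f] lipschitz_on_nonneg[OF g] by simp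
  qed
  then show ?thesis ..
qed

lemma lipschitz_on_balls_mult:
  fixes f g :: "'a::real_normed_vector \<Rightarrow> 'b::real_normed_algebra"
  assumes f: "lipschitz_on_balls f" and g: "lipschitz_on_balls g"
  shows "lipschitz_on_balls (\<lambda>x. f x * g x)"
proof (rule lipschitz_on_ballsI)
  fix R
  obtain C D where "C-lipschitz_on (cball 0 R) f" "D-lipschitz_on (cball 0 R) g"
    using lipschitz_on_ballsE[OF f] lipschitz_on_ballsE[OF g] by metis
  then show "\<exists>L. L-lipschitz_on (cball 0 R) (\<lambda>x. f x * g x)"
    using lipschitz_on_balls_bounded_image[OF f] lipschitz_on_balls_bounded_image[OF g]
    by (rule lipschitz_on_mult)
qed

lemma lipschitz_on_balls_sum:
  fixes f :: "'i \<Rightarrow> 'a::real_normed_vector \<Rightarrow> 'b::real_normed_vector"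
  assumes "\<And>j. j \<in> A \<Longrightarrow> lipschitz_on_balls (f j)"
  shows "lipschitz_on_balls (\<lambda>x. \<Sum>j\<in>A. f j x)"
  using assms
  by (induction A rule: infinite_finite_induct) (auto intro: lipschitz_on_balls_add lipschitz_on_balls_const)

lemma lipschitz_on_balls_vec:
  fixes h :: "'a::real_normed_vector \<Rightarrow> real^'n"
  assumes "\<And>i. lipschitz_on_balls (\<lambda>x. h x $ i)"
  shows "lipschitz_on_balls h"
proof -
  have expansion: "h = (\<lambda>x. \<Sum>i\<in>UNIV. h x $ i *\<^sub>R axis i 1)"
  proof
    show "h x = (\<Sum>i\<in>UNIV. h x $ i *\<^sub>R axis i 1)" for x
      using basis_expansion[of "h x", symmetric] by (simp add: scalar_mult_eq_scaleR)
  qed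
  have "lipschitz_on_balls (\<lambda>t::real. t *\<^sub>R axis i (1::real))" for i
    by (intro lipschitz_on_balls_bounded_linear bounded_linear_scaleR_left)
  then have "lipschitz_on_balls (\<lambda>x. h x $ i *\<^sub>R axis i (1::real))" for i
    using lipschitz_on_balls_compose assms by blast
  then have "lipschitz_on_balls (\<lambda>x. \<Sum>i\<in>UNIV. h x $ i *\<^sub>R axis i (1::real))"
    by (rule lipschitz_on_balls_sum)
  then show ?thesis
    by (subst expansion)
qed

lemma lipschitz_on_balls_loc_lipschitz:
  assumes "loc_lipschitz h"
  shows "lipschitz_on_balls h"
proof (rule lipschitz_on_ballsI)
  fix R
  have "local_lipschitz {0::real} (cball 0 R) (\<lambda>_. h)"
  proof (rule local_lipschitzI)
    fix x :: real
    obtain e L where "e > 0" and L: "\<forall>y\<in>cball x e. \<forall>z\<in>cball x e. \<bar>h y - h z\<bar> \<le> L * \<bar>y - z\<bar>"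
      using assms unfolding loc_lipschitz_def by blast
    have "(max L 0)-lipschitz_on (cball x e \<inter> cball 0 R) h"
    proof (rule lipschitz_onI)
      fix y z assume "y \<in> cball x e \<inter> cball 0 R" "z \<in> cball x e \<inter> cball 0 R"
      then have "\<bar>h y - h z\<bar> \<le> L * \<bar>y - z\<bar>" using L by auto
      also have "\<dots> \<le> max L 0 * \<bar>y - z\<bar>" by (intro mult_right_mono) auto
      finally show "dist (h y) (h z) \<le> max L 0 * dist y z" by (simp add: dist_real_def)
    qed auto
    then show "\<exists>u>0. \<exists>L. \<forall>t\<in>cball t u \<inter> {0}. L-lipschitz_on (cball x u \<inter> cball 0 R) h" for t :: real
      using \<open>e > 0\<close> by blast
  qed
  then obtain L where "L-lipschitz_on (cball 0 R) h"
    by (rule local_lipschitz_compact_implies_lipschitz) auto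
  then show "\<exists>L. L-lipschitz_on (cball 0 R) h" ..
qed

lemma lipschitz_on_balls_continuous_deriv:
  fixes h :: "real \<Rightarrow> real"
  assumes deriv: "\<And>x. (h has_real_derivative h' x) (at x)" and cont: "continuous_on UNIV h'"
  shows "lipschitz_on_balls h"
proof (rule lipschitz_on_ballsI)
  fix R
  have "compact (h' ` cball 0 R)"
    by (intro compact_continuous_image continuous_on_subset[OF cont]) auto
  then have "bounded (h' ` cball 0 R)"
    by (rule compact_imp_bounded)
  then obtain B where "B > 0" and B: "\<And>x. x \<in> cball 0 R \<Longrightarrow> \<bar>h' x\<bar> \<le> B"
    unfolding bounded_pos by auto
  have "B-lipschitz_on (cball 0 R) h"
  proof (rule bounded_derivative_imp_lipschitz)
    fix x
    have "(\<lambda>y. y *\<^sub>R h' x) = (*) (h' x)"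
      by (simp add: fun_eq_iff)
    then show "(h has_derivative (\<lambda>y. y *\<^sub>R h' x)) (at x within cball 0 R)"
      using deriv[of x] by (simp add: has_field_derivative_def has_derivative_at_withinI)
    assume "x \<in> cball 0 R"
    then show "onorm (\<lambda>y. y *\<^sub>R h' x) \<le> B"
      using B by (simp only: onorm_scaleR_left[OF bounded_linear_ident] onorm_id) simp
  qed (use \<open>B > 0\<close> in auto)
  then show "\<exists>L. L-lipschitz_on (cball 0 R) h" ..
qed

lemma lipschitz_on_balls_Gam: "lipschitz_on_balls (Gam r V)"
proof (rule lipschitz_on_balls_continuous_deriv)
  have pos: "1 + exp y \<noteq> 0" for y :: real
    by (smt (verit) exp_gt_zero)
  show "(Gam r V has_real_derivative r * exp (- r * (s - V)) / (1 + exp (- r * (s - V)))^2) (at s)" for s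
    unfolding Gam_def[abs_def] using pos
    by (auto intro!: derivative_eq_intros simp: power2_eq_square field_simps)
  show "continuous_on UNIV (\<lambda>s. r * exp (- r * (s - V)) / (1 + exp (- r * (s - V)))^2)"
    by (intro continuous_intros) (simp add: pos)
qed

lemma lipschitz_on_balls_truncate:
  fixes F :: "'a::euclidean_space \<Rightarrow> 'b::real_normed_vector"
  assumes "lipschitz_on_balls F" "0 \<le> R"
  obtains L where "L-lipschitz_on UNIV (\<lambda>y. F (closest_point (cball 0 R) y))"
proof -
  have ball: "convex (cball (0::'a) R)" "closed (cball (0::'a) R)" "cball (0::'a) R \<noteq> {}"
    using \<open>0 \<le> R\<close> by auto
  obtain L where L: "L-lipschitz_on (cball 0 R) F"
    using assms(1) by (rule lipschitz_on_ballsE)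
  have "1-lipschitz_on UNIV (closest_point (cball (0::'a) R))"
    using closest_point_lipschitz[OF ball] by (auto intro: lipschitz_onI)
  then have "(L * 1)-lipschitz_on UNIV (\<lambda>y. F (closest_point (cball 0 R) y))"
    using closest_point_in_set[OF ball(2,3)] by (intro lipschitz_on_compose2 lipschitz_on_subset[OF L]) auto
  then show ?thesis
    using that by simp
qed

section \<open>Differential inequalities\<close>

lemma nonincreasing_of_deriv_nonpos:
  fixes \<psi> :: "real \<Rightarrow> real"
  assumes deriv: "\<And>\<tau>. \<tau> \<in> {0..t} \<Longrightarrow> (\<psi> has_real_derivative \<psi>' \<tau>) (at \<tau> within {0..})"
    and nonpos: "\<And>\<tau>. \<tau> \<in> {0..t} \<Longrightarrow> \<psi>' \<tau> \<le> 0"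
    and "0 \<le> t"
  shows "\<psi> t \<le> \<psi> 0"
proof -
  have "(\<psi> has_derivative (\<lambda>h. \<psi>' \<tau> * h)) (at \<tau> within {0..t})" if "0 \<le> \<tau>" "\<tau> \<le> t" for \<tau>
    using DERIV_subset[OF deriv] that by (auto simp: has_field_derivative_def)
  from mvt_very_simple[OF \<open>0 \<le> t\<close> this]
  obtain \<tau> where \<tau>: "\<tau> \<in> {0..t}" and mvt: "\<psi> t - \<psi> 0 = \<psi>' \<tau> * (t - 0)"
    by blast
  have "\<psi>' \<tau> * (t - 0) \<le> 0"
    using nonpos[OF \<tau>] \<open>0 \<le> t\<close> by (simp add: mult_nonpos_nonneg)
  then show ?thesis
    using mvt by linarith
qed

lemma linear_differential_inequality:
  fixes h :: "real \<Rightarrow> real"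
  assumes deriv: "\<And>\<tau>. \<tau> \<in> {0..t} \<Longrightarrow> (h has_real_derivative h' \<tau>) (at \<tau> within {0..})"
    and le: "\<And>\<tau>. \<tau> \<in> {0..t} \<Longrightarrow> h' \<tau> \<le> c * h \<tau> + e"
    and "c \<noteq> 0" "0 \<le> t"
  shows "h t + e / c \<le> (h 0 + e / c) * exp (c * t)"
proof -
  define \<psi> where "\<psi> \<tau> = (h \<tau> + e / c) * exp (- c * \<tau>)" for \<tau>
  have "\<psi> t \<le> \<psi> 0"
  proof (rule nonincreasing_of_deriv_nonpos)
    fix \<tau> assume \<tau>: "\<tau> \<in> {0..t}"
    show "(\<psi> has_real_derivative (h' \<tau> - c * h \<tau> - e) * exp (- c * \<tau>)) (at \<tau> within {0..})"
      unfolding \<psi>_def[abs_def] using \<open>c \<noteq> 0\<close>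
      by (auto intro!: derivative_eq_intros deriv[OF \<tau>] simp: field_simps)
    show "(h' \<tau> - c * h \<tau> - e) * exp (- c * \<tau>) \<le> 0"
      using le[OF \<tau>] by (intro mult_nonpos_nonneg) auto
  qed fact
  then have "(h t + e / c) * exp (- c * t) * exp (c * t) \<le> (h 0 + e / c) * exp (c * t)"
    unfolding \<psi>_def by (intro mult_right_mono) auto
  then show ?thesis
    by (simp add: mult.assoc flip: exp_add)
qed

lemma has_real_derivative_compose_vector:
  assumes "(Z has_derivative DZ) (at (g \<tau>))"
    and "(g has_vector_derivative v) (at \<tau> within S)"
  shows "((\<lambda>s. Z (g s)) has_real_derivative DZ v) (at \<tau> within S)"
proof -
  have g_deriv: "(g has_derivative (\<lambda>h. h *\<^sub>R v)) (at \<tau> within S)"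
    using assms(2) by (simp add: has_vector_derivative_def)
  have "((Z \<circ> g) has_derivative (DZ \<circ> (\<lambda>h. h *\<^sub>R v))) (at \<tau> within S)"
    by (rule diff_chain_within[OF g_deriv has_derivative_at_withinI[OF assms(1)]])
  moreover have "DZ \<circ> (\<lambda>h. h *\<^sub>R v) = (*) (DZ v)"
    using linear_cmul[OF has_derivative_linear[OF assms(1)]] by (auto simp: fun_eq_iff)
  ultimately show ?thesis
    by (simp add: has_field_derivative_def o_def)
qed

lemma is_solution_shift:
  assumes "is_solution F x g" "0 \<le> s"
  shows "is_solution F (g s) (\<lambda>\<tau>. g (s + \<tau>))"
  unfolding is_solution_def
proof (intro conjI allI impI)
  fix \<tau> :: real assume "0 \<le> \<tau>"
  have "(\<lambda>\<tau>. s + \<tau>) ` {0..} \<subseteq> {0..}"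
    using \<open>0 \<le> s\<close> by auto
  then have "(g has_vector_derivative F (g (s + \<tau>))) (at (s + \<tau>) within (\<lambda>\<tau>. s + \<tau>) ` {0..})"
    by (rule has_vector_derivative_within_subset[rotated])
      (use assms \<open>0 \<le> \<tau>\<close> in \<open>simp add: is_solution_def\<close>)
  moreover have "((\<lambda>\<tau>. s + \<tau>) has_vector_derivative 1) (at \<tau> within {0..})"
    by (auto intro!: derivative_eq_intros)
  ultimately show "((\<lambda>\<tau>. g (s + \<tau>)) has_vector_derivative F (g (s + \<tau>))) (at \<tau> within {0..})"
    using vector_diff_chain_within by (fastforce simp: o_def)
qed simp

lemma is_solution_transform:
  assumes "is_solution G x g" "\<And>t. 0 \<le> t \<Longrightarrow> G (g t) = F (g t)"
  shows "is_solution F x g"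
  using assms by (simp add: is_solution_def)

lemma continuous_on_solution:
  assumes "is_solution F x g"
  shows "continuous_on {0..} g"
  unfolding continuous_on_eq_continuous_within
  using assms by (auto simp: is_solution_def intro: has_vector_derivative_continuous)

lemma solutions_dist_le:
  fixes F :: "'a::real_inner \<Rightarrow> 'a"
  assumes g: "is_solution F x g" and h: "is_solution F y h"
    and L: "L-lipschitz_on S F" and in_S: "\<And>\<tau>. 0 \<le> \<tau> \<Longrightarrow> g \<tau> \<in> S \<and> h \<tau> \<in> S"
    and "0 \<le> t"
  shows "(norm (g t - h t))^2 \<le> (norm (x - y))^2 * exp ((2 * L + 1) * t)"
proof -
  \<comment> \<open>The rate \<open>2 * L + 1\<close> rather than \<open>2 * L\<close> only keeps it nonzero.\<close>
  have "(norm (g t - h t))^2 + 0 / (2 * L + 1) \<le> ((norm (g 0 - h 0))^2 + 0 / (2 * L + 1)) * exp ((2 * L + 1) * t)"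
  proof (rule linear_differential_inequality)
    fix \<tau> assume \<tau>: "\<tau> \<in> {0..t}"
    have "((\<lambda>s. g s - h s) has_vector_derivative F (g \<tau>) - F (h \<tau>)) (at \<tau> within {0..})"
      using g h \<tau> unfolding is_solution_def by (auto intro: has_vector_derivative_diff)
    moreover have "((\<lambda>x. (norm x)^2) has_derivative (\<lambda>v. 2 * ((g \<tau> - h \<tau>) \<bullet> v))) (at (g \<tau> - h \<tau>))"
      unfolding power2_norm_eq_inner by (auto intro!: derivative_eq_intros simp: inner_commute)
    ultimately show "((\<lambda>s. (norm (g s - h s))^2) has_real_derivative 2 * ((g \<tau> - h \<tau>) \<bullet> (F (g \<tau>) - F (h \<tau>)))) (at \<tau> within {0..})"
      by (rule has_real_derivative_compose_vector[where Z="\<lambda>x. (norm x)^2" and g="\<lambda>s. g s - h s", rotated])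
    have "(g \<tau> - h \<tau>) \<bullet> (F (g \<tau>) - F (h \<tau>)) \<le> norm (g \<tau> - h \<tau>) * norm (F (g \<tau>) - F (h \<tau>))"
      by (rule norm_cauchy_schwarz)
    also have "\<dots> \<le> norm (g \<tau> - h \<tau>) * (L * norm (g \<tau> - h \<tau>))"
      using lipschitz_onD[OF L, of "g \<tau>" "h \<tau>"] in_S[of \<tau>] \<tau> by (intro mult_left_mono) (auto simp: dist_norm)
    finally have "2 * ((g \<tau> - h \<tau>) \<bullet> (F (g \<tau>) - F (h \<tau>))) \<le> 2 * L * (norm (g \<tau> - h \<tau>))^2"
      by (simp add: power2_eq_square algebra_simps)
    also have "\<dots> \<le> (2 * L + 1) * (norm (g \<tau> - h \<tau>))^2 + 0"
      by (simp add: algebra_simps)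
    finally show "2 * ((g \<tau> - h \<tau>) \<bullet> (F (g \<tau>) - F (h \<tau>))) \<le> (2 * L + 1) * (norm (g \<tau> - h \<tau>))^2 + 0" .
  qed (use lipschitz_on_nonneg[OF L] \<open>0 \<le> t\<close> in simp_all)
  moreover have "g 0 = x" "h 0 = y"
    using g h by (simp_all add: is_solution_def)
  ultimately show ?thesis
    by simp
qed

section \<open>Global solutions of globally Lipschitz equations\<close>

primrec picard_iterate :: "('a::banach \<Rightarrow> 'a) \<Rightarrow> 'a \<Rightarrow> nat \<Rightarrow> real \<Rightarrow> 'a" where
  "picard_iterate G x0 0 = (\<lambda>t. x0)"
| "picard_iterate G x0 (Suc n) = (\<lambda>t. x0 + integral {0..t} (\<lambda>s. G (picard_iterate G x0 n s)))"

lemma integral_cmult_power: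
  assumes "0 \<le> t"
  shows "integral {0..t} (\<lambda>s. C * s ^ k) = C * t ^ Suc k / Suc k"
proof -
  have "((\<lambda>s. C * s ^ Suc k / Suc k) has_real_derivative C * x ^ k) (at x within {0..t})" for x
    using DERIV_cdivide[OF DERIV_cmult[OF DERIV_pow[of "Suc k" x "{0..t}"]], of C "Suc k"]
    by (simp del: of_nat_Suc)
  then have "((\<lambda>s. C * s ^ k) has_integral C * t ^ Suc k / Suc k - C * 0 ^ Suc k / Suc k) {0..t}"
    using assms by (intro fundamental_theorem_of_calculus) (auto simp: has_real_derivative_iff_has_vector_derivative)
  then show ?thesis
    by (intro integral_unique) simp
qed

context
  fixes G :: "'a::banach \<Rightarrow> 'a" and L :: real
  assumes G_lipschitz: "L-lipschitz_on UNIV G"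
begin

lemma continuous_on_picard_iterate: "continuous_on {0..T} (picard_iterate G x0 n)"
  and continuous_on_comp_picard_iterate: "continuous_on {0..T} (\<lambda>s. G (picard_iterate G x0 n s))"
proof -
  have G_cont: "continuous_on UNIV G"
    by (rule lipschitz_on_continuous_on[OF G_lipschitz])
  show *: "continuous_on {0..T} (picard_iterate G x0 n)" for n
  proof (induction n)
    case (Suc n)
    then have "continuous_on {0..T} (\<lambda>s. G (picard_iterate G x0 n s))"
      by (rule continuous_on_compose2[OF G_cont]) auto
    then show ?case
      by (auto intro!: continuous_intros indefinite_integral_continuous_1 integrable_continuous_real)
  qed simp
  show "continuous_on {0..T} (\<lambda>s. G (picard_iterate G x0 n s))"
    by (rule continuous_on_compose2[OF G_cont *]) auto
qed

lemma picard_iterate_step_bound: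
  assumes "0 \<le> t"
  shows "norm (picard_iterate G x0 (Suc n) t - picard_iterate G x0 n t)
           \<le> norm (G x0) * L ^ n * t ^ Suc n / fact (Suc n)"
  using assms
proof (induction n arbitrary: t)
  case 0
  then show ?case
    by (simp add: integral_const_real)
next
  case (Suc n)
  define M where "M = norm (G x0)"
  have L: "0 \<le> L"
    by (rule lipschitz_on_nonneg[OF G_lipschitz])
  have int: "(\<lambda>s. G (picard_iterate G x0 m s)) integrable_on {0..t}" for m
    by (rule integrable_continuous_real[OF continuous_on_comp_picard_iterate])
  have "picard_iterate G x0 (Suc (Suc n)) t - picard_iterate G x0 (Suc n) t
          = integral {0..t} (\<lambda>s. G (picard_iterate G x0 (Suc n) s) - G (picard_iterate G x0 n s))"
    unfolding picard_iterate.simps(2)[of G x0 "Suc n", THEN fun_cong, of t]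
      picard_iterate.simps(2)[of G x0 n, THEN fun_cong, of t]
    by (simp add: integral_diff[OF int int] del: picard_iterate.simps)
  also have "norm \<dots> \<le> integral {0..t} (\<lambda>s. L * (M * L ^ n / fact (Suc n)) * s ^ Suc n)"
  proof (rule integral_norm_bound_integral)
    fix s assume s: "s \<in> {0..t}"
    have "norm (G (picard_iterate G x0 (Suc n) s) - G (picard_iterate G x0 n s))
            \<le> L * norm (picard_iterate G x0 (Suc n) s - picard_iterate G x0 n s)"
      using lipschitz_onD[OF G_lipschitz] by (simp add: dist_norm)
    also have "\<dots> \<le> L * (M * L ^ n * s ^ Suc n / fact (Suc n))"
      using Suc.IH[of s] s L by (intro mult_left_mono) (auto simp: M_def)
    finally show "norm (G (picard_iterate G x0 (Suc n) s) - G (picard_iterate G x0 n s))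
                    \<le> L * (M * L ^ n / fact (Suc n)) * s ^ Suc n"
      by simp
  qed (rule integrable_diff[OF int int], intro integrable_continuous_real continuous_intros)
  also have "\<dots> = L * (M * L ^ n / fact (Suc n)) * t ^ Suc (Suc n) / Suc (Suc n)"
    by (rule integral_cmult_power[OF Suc.prems])
  also have "\<dots> = M * L ^ Suc n * t ^ Suc (Suc n) / fact (Suc (Suc n))"
    by (simp add: fact_Suc[of "Suc n"] field_simps del: fact_Suc of_nat_Suc)
  finally show ?case
    by (simp add: M_def)
qed

lemma uniform_limit_picard_iterate: "\<exists>p. \<forall>T. uniform_limit {0..T} (picard_iterate G x0) p sequentially"
proof -
  define d where "d k t = picard_iterate G x0 (Suc k) t - picard_iterate G x0 k t" for k t
  define M where "M = norm (G x0)"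
  have L: "0 \<le> L"
    by (rule lipschitz_on_nonneg[OF G_lipschitz])
  have telescope: "picard_iterate G x0 n = (\<lambda>t. x0 + (\<Sum>k<n. d k t))" for n
    using sum_lessThan_telescope[of "\<lambda>k. picard_iterate G x0 k _" n] by (auto simp: d_def fun_eq_iff)
  have limit: "uniform_limit {0..T} (picard_iterate G x0) (\<lambda>t. x0 + (\<Sum>k. d k t)) sequentially"
    if "0 \<le> T" for T
  proof -
    have "summable (\<lambda>k. M * L ^ k * T ^ Suc k / fact (Suc k))"
    proof (rule summable_comparison_test')
      show "summable (\<lambda>k. M * T * (inverse (fact k) * (L * T) ^ k))"
        by (intro summable_mult summable_exp)
      have "M * L ^ k * T ^ Suc k / fact (Suc k) \<le> M * L ^ k * T ^ Suc k / fact k" for k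
        using L \<open>0 \<le> T\<close> by (intro divide_left_mono fact_mono) (auto simp: M_def)
      then show "norm (M * L ^ k * T ^ Suc k / fact (Suc k)) \<le> M * T * (inverse (fact k) * (L * T) ^ k)" for k
        using L \<open>0 \<le> T\<close> by (simp add: M_def field_simps power_mult_distrib)
    qed
    then have "uniform_limit {0..T} (\<lambda>n t. \<Sum>k<n. d k t) (\<lambda>t. \<Sum>k. d k t) sequentially"
    proof (rule Weierstrass_m_test[rotated])
      fix k t assume t: "t \<in> {0..T}"
      have "norm (d k t) \<le> M * L ^ k * t ^ Suc k / fact (Suc k)"
        using picard_iterate_step_bound[of t] t by (simp add: d_def M_def)
      also have "\<dots> \<le> M * L ^ k * T ^ Suc k / fact (Suc k)"
        using t L by (intro divide_right_mono mult_left_mono power_mono) (auto simp: M_def)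
      finally show "norm (d k t) \<le> M * L ^ k * T ^ Suc k / fact (Suc k)" .
    qed
    then show ?thesis
      unfolding telescope by (intro uniform_limit_intros)
  qed
  have "uniform_limit {0..T} (picard_iterate G x0) (\<lambda>t. x0 + (\<Sum>k. d k t)) sequentially" for T
    using uniform_limit_on_subset[OF limit[of "max T 0"]] by auto
  then show ?thesis
    by blast
qed

lemma picard_limit_integral_equation:
  assumes p: "\<And>T. uniform_limit {0..T} (picard_iterate G x0) p sequentially" and "0 \<le> t"
  shows "p t = x0 + integral {0..t} (\<lambda>s. G (p s))"
proof -
  have "uniform_limit {0..t} (\<lambda>n s. G (picard_iterate G x0 n s)) (\<lambda>s. G (p s)) sequentially"
    using p lipschitz_on_uniformly_continuous[OF G_lipschitz]
    by (rule uniform_limit_compose_uniformly_continuous_on) auto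
  from uniform_limit_integral[OF this continuous_on_comp_picard_iterate trivial_limit_sequentially]
  obtain I J where I: "\<And>n. ((\<lambda>s. G (picard_iterate G x0 n s)) has_integral I n) {0..t}"
    and J: "((\<lambda>s. G (p s)) has_integral J) {0..t}" and "I \<longlonglongrightarrow> J"
    by blast
  have "integral {0..t} (\<lambda>s. G (picard_iterate G x0 n s)) = I n" for n
    using I by (rule integral_unique)
  then have "(\<lambda>n. picard_iterate G x0 (Suc n) t) \<longlonglongrightarrow> x0 + J"
    using tendsto_add[OF tendsto_const \<open>I \<longlonglongrightarrow> J\<close>, of x0] by simp
  moreover have "(\<lambda>n. picard_iterate G x0 (Suc n) t) \<longlonglongrightarrow> p t"
    using LIMSEQ_Suc[OF tendsto_uniform_limitI[OF p, of t t]] \<open>0 \<le> t\<close> by (simp del: picard_iterate.simps)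
  ultimately show ?thesis
    using J LIMSEQ_unique integral_unique by metis
qed

theorem lipschitz_solution_exists: "\<exists>g. is_solution G x0 g"
proof -
  obtain p where p: "\<And>T. uniform_limit {0..T} (picard_iterate G x0) p sequentially"
    using uniform_limit_picard_iterate by blast
  have p_eq: "p t = x0 + integral {0..t} (\<lambda>s. G (p s))" if "0 \<le> t" for t
    using p that by (rule picard_limit_integral_equation)
  have "(p has_vector_derivative G (p t)) (at t within {0..})" if t: "0 \<le> t" for t
  proof -
    have p_cont: "continuous_on {0..t + 1} p"
      by (rule uniform_limit_theorem[OF _ p]) (auto intro: always_eventually continuous_on_picard_iterate)
    have "continuous_on {0..t + 1} (\<lambda>s. G (p s))"
      by (rule continuous_on_compose2[OF lipschitz_on_continuous_on[OF G_lipschitz] p_cont]) auto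
    from integral_has_vector_derivative[OF this, of t]
    have "((\<lambda>u. x0 + integral {0..u} (\<lambda>s. G (p s))) has_vector_derivative G (p t)) (at t within {0..t + 1})"
      using t by (auto intro!: derivative_eq_intros)
    then have "(p has_vector_derivative G (p t)) (at t within {0..t + 1})"
      by (rule has_vector_derivative_transform_within[of _ _ _ _ 1]) (use t p_eq in auto)
    moreover have "at t within {0..t + 1} = at t within {0..}"
      by (rule at_within_nhd[of _ "{..<t + 1}"]) auto
    ultimately show ?thesis
      by simp
  qed
  moreover have "p 0 = x0"
    using p_eq[of 0] by simp
  ultimately show ?thesis
    unfolding is_solution_def by blast
qed

end

section \<open>Global attractors of dissipative semiflows\<close>

text \<open>Sequential form of the omega-limit set
  \<open>\<Inter>s\<ge>0. closure (\<Union>t\<ge>s. S t ` B)\<close>.\<close>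

definition omega_limit :: "(real \<Rightarrow> 'a::topological_space \<Rightarrow> 'a) \<Rightarrow> 'a set \<Rightarrow> 'a set" where
  "omega_limit S B =
     {y. \<exists>xs \<tau>. (\<forall>n. xs n \<in> B) \<and> (\<forall>n. real n \<le> \<tau> n) \<and> (\<lambda>n. S (\<tau> n) (xs n)) \<longlonglongrightarrow> y}"

lemma omega_limitI:
  "(\<And>n. xs n \<in> B) \<Longrightarrow> (\<And>n. real n \<le> \<tau> n) \<Longrightarrow> (\<lambda>n. S (\<tau> n) (xs n)) \<longlonglongrightarrow> y \<Longrightarrow> y \<in> omega_limit S B"
  unfolding omega_limit_def by blast

lemma diagonal_limit:
  fixes X :: "nat \<Rightarrow> nat \<Rightarrow> 'a::metric_space"
  assumes lim: "\<And>k. X k \<longlonglongrightarrow> y k" and "y \<longlonglongrightarrow> l"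
  obtains N where "\<And>k. k \<le> N k" "(\<lambda>k. X k (N k)) \<longlonglongrightarrow> l"
proof -
  have "\<exists>n\<ge>k. dist (X k n) (y k) < inverse (Suc k)" for k
  proof -
    have "\<forall>\<^sub>F n in sequentially. dist (X k n) (y k) < inverse (Suc k)"
      using lim[of k] by (rule tendstoD) simp
    then obtain N0 where "\<And>n. N0 \<le> n \<Longrightarrow> dist (X k n) (y k) < inverse (Suc k)"
      by (auto simp: eventually_sequentially)
    then show ?thesis
      by (intro exI[of _ "max N0 k"]) auto
  qed
  then obtain N where N: "\<And>k. k \<le> N k" and close: "\<And>k. dist (X k (N k)) (y k) < inverse (Suc k)"
    by metis
  have bound: "\<forall>k. norm (dist (X k (N k)) l) \<le> inverse (real (Suc k)) + dist (y k) l"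
  proof
    fix k
    show "norm (dist (X k (N k)) l) \<le> inverse (real (Suc k)) + dist (y k) l"
      using dist_triangle[of "X k (N k)" l "y k"] close[of k] by simp
  qed
  have "(\<lambda>k. inverse (real (Suc k)) + dist (y k) l) \<longlonglongrightarrow> 0"
    using tendsto_add_zero[OF LIMSEQ_inverse_real_of_nat tendsto_dist_iff[THEN iffD1, OF \<open>y \<longlonglongrightarrow> l\<close>]] .
  with bound have "(\<lambda>k. dist (X k (N k)) l) \<longlonglongrightarrow> 0"
    by (rule Lim_null_comparison[OF always_eventually])
  then have "(\<lambda>k. X k (N k)) \<longlonglongrightarrow> l"
    by (rule tendsto_dist_iff[THEN iffD2])
  then show ?thesis
    by (rule that[OF N])
qed

locale dissipative_semiflow =
  fixes S :: "real \<Rightarrow> 'a::heine_borel \<Rightarrow> 'a" and B :: "'a set"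
  assumes semigroup: "\<And>s t x. 0 \<le> s \<Longrightarrow> 0 \<le> t \<Longrightarrow> S (s + t) x = S t (S s x)"
    and continuous_semiflow: "\<And>t. 0 \<le> t \<Longrightarrow> continuous_on UNIV (S t)"
    and absorbing: "\<And>D. bounded D \<Longrightarrow> \<exists>T\<ge>0. \<forall>t\<ge>T. S t ` D \<subseteq> B"
    and bounded_orbit: "bounded (\<Union>t\<in>{0..}. S t ` B)"
begin

lemma tendsto_semiflow: "0 \<le> t \<Longrightarrow> f \<longlonglongrightarrow> x \<Longrightarrow> (\<lambda>n. S t (f n)) \<longlonglongrightarrow> S t x"
  by (rule continuous_on_tendsto_compose[OF continuous_semiflow]) auto

lemma omega_limit_subseq:
  assumes xs: "\<And>n. xs n \<in> B" and \<sigma>: "\<And>n. real n \<le> \<sigma> n"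
  obtains r z where "strict_mono r" "(\<lambda>n. S (\<sigma> (r n)) (xs (r n))) \<longlonglongrightarrow> z" "z \<in> omega_limit S B"
proof -
  have "0 \<le> \<sigma> n" for n
    using \<sigma>[of n] by simp
  then have "range (\<lambda>n. S (\<sigma> n) (xs n)) \<subseteq> (\<Union>t\<in>{0..}. S t ` B)"
    using xs by blast
  then have "bounded (range (\<lambda>n. S (\<sigma> n) (xs n)))"
    using bounded_orbit bounded_subset by blast
  from bounded_imp_convergent_subsequence[OF this]
  obtain z r where r: "strict_mono r" and "((\<lambda>n. S (\<sigma> n) (xs n)) \<circ> r) \<longlonglongrightarrow> z"
    by blast
  then have lim: "(\<lambda>n. S (\<sigma> (r n)) (xs (r n))) \<longlonglongrightarrow> z"
    by (simp add: o_def)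
  have "z \<in> omega_limit S B"
  proof (rule omega_limitI[where xs="\<lambda>n. xs (r n)" and \<tau>="\<lambda>n. \<sigma> (r n)", OF _ _ lim])
    show "real n \<le> \<sigma> (r n)" for n
      using seq_suble[OF r, of n] \<sigma>[of "r n"] by linarith
  qed (rule xs)
  with r lim show ?thesis
    using that by blast
qed

lemma closed_omega_limit: "closed (omega_limit S B)"
  unfolding closed_sequential_limits
proof (intro allI impI, elim conjE)
  fix ys l assume ys: "\<forall>k. ys k \<in> omega_limit S B" and "ys \<longlonglongrightarrow> l"
  have "\<forall>k. \<exists>xs \<tau>. (\<forall>n. xs n \<in> B) \<and> (\<forall>n. real n \<le> \<tau> n) \<and> (\<lambda>n. S (\<tau> n) (xs n)) \<longlonglongrightarrow> ys k"
    using ys unfolding omega_limit_def by blast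
  then obtain XS T
    where H: "\<And>k. (\<forall>n. XS k n \<in> B) \<and> (\<forall>n. real n \<le> T k n) \<and> (\<lambda>n. S (T k n) (XS k n)) \<longlonglongrightarrow> ys k"
    by metis
  then have lim: "\<And>k. (\<lambda>n. S (T k n) (XS k n)) \<longlonglongrightarrow> ys k"
    by blast
  obtain N where N: "\<And>k. k \<le> N k" and lim_N: "(\<lambda>k. S (T k (N k)) (XS k (N k))) \<longlonglongrightarrow> l"
    using diagonal_limit[where X="\<lambda>k n. S (T k n) (XS k n)", OF lim \<open>ys \<longlonglongrightarrow> l\<close>] by blast
  show "l \<in> omega_limit S B"
  proof (rule omega_limitI[where xs="\<lambda>k. XS k (N k)" and \<tau>="\<lambda>k. T k (N k)", OF _ _ lim_N])
    show "XS k (N k) \<in> B" for k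
      using H by blast
    have "real k \<le> real (N k)" for k
      using N[of k] by simp
    then show "real k \<le> T k (N k)" for k
      using H[of k] by (meson order_trans)
  qed
qed

lemma compact_omega_limit: "compact (omega_limit S B)"
proof -
  have "omega_limit S B \<subseteq> closure (\<Union>t\<in>{0..}. S t ` B)"
  proof
    fix y assume "y \<in> omega_limit S B"
    then obtain xs \<tau> where xs: "\<And>n. xs n \<in> B" and \<tau>: "\<And>n. real n \<le> \<tau> n"
      and lim: "(\<lambda>n. S (\<tau> n) (xs n)) \<longlonglongrightarrow> y"
      unfolding omega_limit_def by blast
    have "S (\<tau> n) (xs n) \<in> (\<Union>t\<in>{0..}. S t ` B)" for n
    proof -
      have "0 \<le> \<tau> n"
        using \<tau>[of n] by simp
      then show ?thesis
        using xs by blast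
    qed
    with lim show "y \<in> closure (\<Union>t\<in>{0..}. S t ` B)"
      unfolding closure_sequential by (intro exI[of _ "\<lambda>n. S (\<tau> n) (xs n)"]) simp
  qed
  then have "bounded (omega_limit S B)"
    using bounded_closure[OF bounded_orbit] bounded_subset by blast
  then show ?thesis
    using closed_omega_limit by (simp add: compact_eq_bounded_closed)
qed

lemma omega_limit_nonempty: "omega_limit S B \<noteq> {}"
proof -
  fix x :: 'a
  obtain T where "0 \<le> T" "\<forall>t\<ge>T. S t ` {x} \<subseteq> B"
    using absorbing[of "{x}"] by auto
  then have x: "S T x \<in> B"
    by blast
  obtain r z where "strict_mono r" "(\<lambda>n. S (real (r n)) (S T x)) \<longlonglongrightarrow> z" "z \<in> omega_limit S B"
    by (rule omega_limit_subseq[where xs="\<lambda>_. S T x" and \<sigma>=real]) (rule x, simp)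
  then show ?thesis
    by blast
qed

lemma semiflow_omega_limit_subset:
  assumes "0 \<le> t"
  shows "S t ` omega_limit S B \<subseteq> omega_limit S B"
proof clarify
  fix y assume "y \<in> omega_limit S B"
  then obtain xs \<tau> where xs: "\<And>n. xs n \<in> B" and \<tau>: "\<And>n. real n \<le> \<tau> n"
    and lim: "(\<lambda>n. S (\<tau> n) (xs n)) \<longlonglongrightarrow> y"
    unfolding omega_limit_def by blast
  have "S (\<tau> n + t) (xs n) = S t (S (\<tau> n) (xs n))" for n
    using semigroup[of "\<tau> n" t] \<tau>[of n] assms by simp
  then have "(\<lambda>n. S (\<tau> n + t) (xs n)) \<longlonglongrightarrow> S t y"
    using tendsto_semiflow[OF assms lim] by simp
  then show "S t y \<in> omega_limit S B"
    using xs \<tau> assms by (intro omega_limitI[of xs _ "\<lambda>n. \<tau> n + t"]) (auto intro: add_increasing2)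
qed

lemma omega_limit_subset_semiflow_image:
  assumes "0 \<le> t"
  shows "omega_limit S B \<subseteq> S t ` omega_limit S B"
proof
  fix y assume "y \<in> omega_limit S B"
  then obtain xs \<tau> where xs: "\<And>n. xs n \<in> B" and \<tau>: "\<And>n. real n \<le> \<tau> n"
    and lim: "(\<lambda>n. S (\<tau> n) (xs n)) \<longlonglongrightarrow> y"
    unfolding omega_limit_def by blast
  define N where "N = nat \<lceil>t\<rceil>"
  define \<sigma> where "\<sigma> n = \<tau> (n + N) - t" for n
  have \<sigma>: "real n \<le> \<sigma> n" for n
    using \<tau>[of "n + N"] unfolding \<sigma>_def N_def by linarith
  obtain r z where r: "strict_mono r" and z_lim: "(\<lambda>n. S (\<sigma> (r n)) (xs (r n + N))) \<longlonglongrightarrow> z"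
    and z: "z \<in> omega_limit S B"
    using omega_limit_subseq[of "\<lambda>n. xs (n + N)" \<sigma>] xs \<sigma> by blast
  have "S t (S (\<sigma> (r n)) (xs (r n + N))) = S (\<tau> (r n + N)) (xs (r n + N))" for n
    using semigroup[of "\<sigma> (r n)" t] \<sigma>[of "r n"] assms by (simp add: \<sigma>_def)
  moreover have "(\<lambda>n. S (\<tau> (r n + N)) (xs (r n + N))) \<longlonglongrightarrow> y"
    using LIMSEQ_subseq_LIMSEQ[OF LIMSEQ_ignore_initial_segment[OF lim, of N] r] by (simp add: o_def)
  ultimately have "(\<lambda>n. S t (S (\<sigma> (r n)) (xs (r n + N)))) \<longlonglongrightarrow> y"
    by simp
  then have "y = S t z"
    using tendsto_semiflow[OF assms z_lim] LIMSEQ_unique by blast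
  with z show "y \<in> S t ` omega_limit S B"
    by blast
qed

lemma omega_limit_attracts:
  assumes "bounded D" "0 < e"
  shows "\<exists>T\<ge>0. \<forall>t\<ge>T. \<forall>x\<in>D. infdist (S t x) (omega_limit S B) < e"
proof (rule ccontr)
  assume contra: "\<not> ?thesis"
  obtain T0 where "0 \<le> T0" and T0: "\<And>t. T0 \<le> t \<Longrightarrow> S t ` D \<subseteq> B"
    using absorbing[OF \<open>bounded D\<close>] by blast
  have "\<exists>t x. T0 + real n \<le> t \<and> x \<in> D \<and> e \<le> infdist (S t x) (omega_limit S B)" for n
  proof -
    have "\<not> (\<forall>t\<ge>T0 + real n. \<forall>x\<in>D. infdist (S t x) (omega_limit S B) < e)"
      using contra \<open>0 \<le> T0\<close> by (meson add_nonneg_nonneg of_nat_0_le_iff)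
    then show ?thesis
      by (auto simp: not_less)
  qed
  then obtain tt xx
    where H: "\<And>n. T0 + real n \<le> tt n \<and> xx n \<in> D \<and> e \<le> infdist (S (tt n) (xx n)) (omega_limit S B)"
    by metis
  define \<sigma> where "\<sigma> n = tt n - T0" for n
  have \<sigma>: "real n \<le> \<sigma> n" for n
    using H[of n] by (simp add: \<sigma>_def)
  have absorbed: "S T0 (xx n) \<in> B" for n
    using T0[of T0] H[of n] by blast
  have flow: "S (tt n) (xx n) = S (\<sigma> n) (S T0 (xx n))" for n
    using semigroup[of T0 "\<sigma> n"] \<open>0 \<le> T0\<close> \<sigma>[of n] by (simp add: \<sigma>_def)
  obtain r z where "strict_mono r" and lim: "(\<lambda>n. S (\<sigma> (r n)) (S T0 (xx (r n)))) \<longlonglongrightarrow> z"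
    and z: "z \<in> omega_limit S B"
    by (rule omega_limit_subseq[where xs="\<lambda>n. S T0 (xx n)" and \<sigma>=\<sigma>]) (rule absorbed, rule \<sigma>)
  then obtain n where "dist (S (\<sigma> (r n)) (S T0 (xx (r n)))) z < e"
    using \<open>0 < e\<close> unfolding lim_sequentially by blast
  moreover have "infdist (S (\<sigma> (r n)) (S T0 (xx (r n)))) (omega_limit S B)
      \<le> dist (S (\<sigma> (r n)) (S T0 (xx (r n)))) z"
    using z by (rule infdist_le)
  ultimately show False
    using H[of "r n"] flow[of "r n"] by simp
qed

theorem global_attractor_omega_limit: "global_attractor S (omega_limit S B)"
  unfolding global_attractor_def
  using omega_limit_nonempty compact_omega_limit semiflow_omega_limit_subset
    omega_limit_subset_semiflow_image omega_limit_attracts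
  by blast

end

section \<open>Equations with a quadratic Lyapunov function\<close>

lemma continuous_barrier:
  fixes w :: "real \<Rightarrow> real"
  assumes cont: "continuous_on {0..} w" and "w 0 < R" "R' < R"
    and step: "\<And>t. 0 \<le> t \<Longrightarrow> \<forall>s\<in>{0..t}. w s \<le> R \<Longrightarrow> w t \<le> R'"
    and "0 \<le> t"
  shows "w t \<le> R'"
proof (rule ccontr)
  assume "\<not> w t \<le> R'"
  then obtain s where "s \<in> {0..t}" "R \<le> w s"
    using step[OF \<open>0 \<le> t\<close>] by force
  define E where "E = {0..t} \<inter> w -` {R..}"
  have "closed E"
    unfolding E_def by (intro continuous_closed_preimage continuous_on_subset[OF cont]) auto
  moreover have "s \<in> E" "bdd_below E"
    using \<open>s \<in> {0..t}\<close> \<open>R \<le> w s\<close> by (auto simp: E_def bdd_below_def)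
  ultimately have "Inf E \<in> E"
    by (intro closed_contains_Inf) auto
  define t1 where "t1 = Inf E"
  have t1: "0 \<le> t1" "t1 \<le> t" "R \<le> w t1"
    using \<open>Inf E \<in> E\<close> by (auto simp: t1_def E_def)
  have before: "w s < R" if "0 \<le> s" "s < t1" for s
  proof (rule ccontr)
    assume "\<not> w s < R"
    then have "s \<in> E"
      using that t1 by (auto simp: E_def)
    then have "t1 \<le> s"
      unfolding t1_def using \<open>bdd_below E\<close> by (rule cInf_lower)
    then show False
      using that by simp
  qed
  have "continuous_on {0..t1} w"
    using cont by (rule continuous_on_subset) auto
  then obtain s1 where "0 \<le> s1" "s1 \<le> t1" "w s1 = R"
    using IVT'[of w 0 R t1] \<open>w 0 < R\<close> t1 by auto
  then have "w t1 = R"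
    using before[of s1] by (cases "s1 = t1") auto
  then have "\<forall>s\<in>{0..t1}. w s \<le> R"
    using before by fastforce
  then show False
    using step[OF \<open>0 \<le> t1\<close>] \<open>w t1 = R\<close> \<open>R' < R\<close> by simp
qed

locale lyapunov_dissipative =
  fixes F :: "'a::euclidean_space \<Rightarrow> 'a" and Z :: "'a \<Rightarrow> real" and DZ :: "'a \<Rightarrow> 'a \<Rightarrow> real"
    and \<mu> K c1 c2 :: real
  assumes lipschitz_on_balls_F: "lipschitz_on_balls F"
    and Z_derivative: "\<And>x. (Z has_derivative DZ x) (at x)"
    and dissipation: "\<And>x. DZ x (F x) \<le> - \<mu> * Z x + K"
    and \<mu>_pos: "0 < \<mu>" and K_nonneg: "0 \<le> K" and c1_pos: "0 < c1"
    and Z_lower: "\<And>x. c1 * (norm x)^2 \<le> Z x" and Z_upper: "\<And>x. Z x \<le> c2 * (norm x)^2"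
begin

lemma Z_nonneg: "0 \<le> Z x"
  using Z_lower[of x] c1_pos by (smt (verit) mult_nonneg_nonneg zero_le_power2)

lemma c1_le_c2: "c1 \<le> c2"
proof -
  obtain b :: 'a where "b \<in> Basis"
    using nonempty_Basis by blast
  then show ?thesis
    using Z_lower[of b] Z_upper[of b] by simp
qed

lemma norm_le_of_Z_le: "Z x \<le> C \<Longrightarrow> norm x \<le> sqrt (C / c1)"
  using Z_lower[of x] c1_pos by (simp add: real_le_rsqrt field_simps)

lemma Z_decay:
  assumes deriv: "\<And>\<tau>. \<tau> \<in> {0..t} \<Longrightarrow> (g has_vector_derivative F (g \<tau>)) (at \<tau> within {0..})"
    and "0 \<le> t"
  shows "Z (g t) \<le> Z (g 0) * exp (- \<mu> * t) + K / \<mu>"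
proof -
  have "Z (g t) + K / (- \<mu>) \<le> (Z (g 0) + K / (- \<mu>)) * exp (- \<mu> * t)"
  proof (rule linear_differential_inequality)
    fix \<tau> assume "\<tau> \<in> {0..t}"
    show "((\<lambda>s. Z (g s)) has_real_derivative DZ (g \<tau>) (F (g \<tau>))) (at \<tau> within {0..})"
      by (rule has_real_derivative_compose_vector[OF Z_derivative deriv]) fact
    show "DZ (g \<tau>) (F (g \<tau>)) \<le> - \<mu> * Z (g \<tau>) + K"
      by (rule dissipation)
  qed (use \<mu>_pos \<open>0 \<le> t\<close> in auto)
  moreover have "0 \<le> K / \<mu> * exp (- \<mu> * t)"
    using K_nonneg \<mu>_pos by simp
  ultimately show ?thesis
    by (simp add: algebra_simps)
qed

lemma solution_Z_decay:
  assumes "is_solution F x g" "0 \<le> t"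
  shows "Z (g t) \<le> Z x * exp (- \<mu> * t) + K / \<mu>"
  using Z_decay[of t g] assms by (simp add: is_solution_def)

definition orbit_radius :: "real \<Rightarrow> real" where
  "orbit_radius r = sqrt ((c2 * r^2 + K / \<mu>) / c1)"

lemma norm_solution_le_orbit_radius:
  assumes "is_solution F x g" "norm x \<le> r" "0 \<le> t"
  shows "norm (g t) \<le> orbit_radius r"
  unfolding orbit_radius_def
proof (rule norm_le_of_Z_le)
  have "Z x * exp (- \<mu> * t) \<le> Z x"
    using Z_nonneg \<mu>_pos \<open>0 \<le> t\<close> by (simp add: mult_left_le)
  also have "\<dots> \<le> c2 * (norm x)^2"
    by (rule Z_upper)
  also have "\<dots> \<le> c2 * r^2"
    using assms(2) c1_pos c1_le_c2 by (intro mult_left_mono power_mono) auto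
  finally show "Z (g t) \<le> c2 * r^2 + K / \<mu>"
    using solution_Z_decay[OF assms(1,3)] by simp
qed

text \<open>Solve the equation for \<open>F\<close> truncated outside a ball of radius \<open>R\<close>, which is globally
  Lipschitz; the Lyapunov bound keeps that solution in a smaller ball, where the truncation is
  inactive.\<close>

lemma solution_exists: "\<exists>g. is_solution F x g"
proof -
  define \<rho> where "\<rho> = sqrt ((Z x + K / \<mu>) / c1)"
  define R where "R = \<rho> + 1"
  define G where "G y = F (closest_point (cball 0 R) y)" for y
  have "0 \<le> \<rho>"
    unfolding \<rho>_def using Z_nonneg K_nonneg \<mu>_pos c1_pos by simp
  then obtain L where "L-lipschitz_on UNIV G"
    unfolding G_def using lipschitz_on_balls_truncate[OF lipschitz_on_balls_F, of R] by (auto simp: R_def)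
  then obtain g where g: "is_solution G x g"
    using lipschitz_solution_exists by blast
  have G_eq: "G y = F y" if "norm y \<le> R" for y
    using that by (simp add: G_def closest_point_self)
  have bound: "norm (g t) \<le> \<rho>" if "0 \<le> t" for t
  proof (rule continuous_barrier[where w="\<lambda>t. norm (g t)" and R=R, OF _ _ _ _ that])
    show "continuous_on {0..} (\<lambda>t. norm (g t))"
      using continuous_on_solution[OF g] by (rule continuous_on_norm)
    have "norm x \<le> \<rho>"
      unfolding \<rho>_def using K_nonneg \<mu>_pos by (intro norm_le_of_Z_le) simp
    then show "norm (g 0) < R"
      using g by (simp add: is_solution_def R_def)
    show "\<rho> < R"
      by (simp add: R_def)
    fix t assume "0 \<le> t" and inside: "\<forall>s\<in>{0..t}. norm (g s) \<le> R"
    have "Z (g t) \<le> Z (g 0) * exp (- \<mu> * t) + K / \<mu>"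
    proof (rule Z_decay[OF _ \<open>0 \<le> t\<close>])
      fix \<tau> assume \<tau>: "\<tau> \<in> {0..t}"
      have "(g has_vector_derivative G (g \<tau>)) (at \<tau> within {0..})"
        using g \<tau> by (simp add: is_solution_def)
      then show "(g has_vector_derivative F (g \<tau>)) (at \<tau> within {0..})"
        using inside \<tau> by (simp add: G_eq)
    qed
    also have "\<dots> \<le> Z x + K / \<mu>"
      using g Z_nonneg \<mu>_pos \<open>0 \<le> t\<close> by (simp add: is_solution_def mult_left_le)
    finally show "norm (g t) \<le> \<rho>"
      unfolding \<rho>_def by (rule norm_le_of_Z_le)
  qed
  have "G (g t) = F (g t)" if "0 \<le> t" for t
    using G_eq[of "g t"] bound[OF that] by (simp add: R_def)
  then have "is_solution F x g"
    by (rule is_solution_transform[OF g])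
  then show ?thesis
    by blast
qed

lemma solution_unique:
  assumes g: "is_solution F x g" and h: "is_solution F x h" and "0 \<le> t"
  shows "g t = h t"
proof -
  define R where "R = orbit_radius (norm x)"
  obtain L where L: "L-lipschitz_on (cball 0 R) F"
    using lipschitz_on_balls_F by (rule lipschitz_on_ballsE)
  have "(norm (g t - h t))^2 \<le> (norm (x - x))^2 * exp ((2 * L + 1) * t)"
  proof (rule solutions_dist_le[OF g h L _ \<open>0 \<le> t\<close>])
    show "g \<tau> \<in> cball 0 R \<and> h \<tau> \<in> cball 0 R" if "0 \<le> \<tau>" for \<tau>
      using norm_solution_le_orbit_radius[OF g _ that] norm_solution_le_orbit_radius[OF h _ that]
      by (simp add: R_def)
  qed
  then show ?thesis
    by simp
qed

definition trajectory :: "'a \<Rightarrow> real \<Rightarrow> 'a" where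
  "trajectory x = (SOME g. is_solution F x g)"

lemma is_solution_trajectory: "is_solution F x (trajectory x)"
  unfolding trajectory_def using solution_exists by (rule someI_ex)

lemma semiflow_eq_trajectory:
  assumes "0 \<le> t"
  shows "semiflow F t x = trajectory x t"
  unfolding semiflow_def
proof (rule the_equality)
  show "\<exists>g. is_solution F x g \<and> g t = trajectory x t"
    using is_solution_trajectory by blast
  show "y = trajectory x t" if "\<exists>g. is_solution F x g \<and> g t = y" for y
    using that solution_unique[OF _ is_solution_trajectory assms] by blast
qed

lemma semiflow_add:
  assumes "0 \<le> s" "0 \<le> t"
  shows "semiflow F (s + t) x = semiflow F t (semiflow F s x)"
proof -
  have "is_solution F (trajectory x s) (\<lambda>\<tau>. trajectory x (s + \<tau>))"
    using is_solution_trajectory assms(1) by (rule is_solution_shift)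
  then have "trajectory x (s + t) = trajectory (trajectory x s) t"
    using solution_unique[OF _ is_solution_trajectory assms(2)] by blast
  then show ?thesis
    using assms by (simp add: semiflow_eq_trajectory)
qed

lemma norm_semiflow_le:
  assumes "norm x \<le> r" "0 \<le> t"
  shows "norm (semiflow F t x) \<le> orbit_radius r"
  using norm_solution_le_orbit_radius[OF is_solution_trajectory assms] assms(2)
  by (simp add: semiflow_eq_trajectory)

lemma semiflow_lipschitz_on_cball:
  assumes "0 \<le> t"
  shows "\<exists>C. C-lipschitz_on (cball 0 r) (semiflow F t)"
proof -
  obtain L where L: "L-lipschitz_on (cball 0 (orbit_radius r)) F"
    using lipschitz_on_balls_F by (rule lipschitz_on_ballsE)
  have "dist (semiflow F t x) (semiflow F t y) \<le> sqrt (exp ((2 * L + 1) * t)) * dist x y"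
    if "x \<in> cball 0 r" "y \<in> cball 0 r" for x y
  proof -
    have "(norm (trajectory x t - trajectory y t))^2 \<le> (norm (x - y))^2 * exp ((2 * L + 1) * t)"
    proof (rule solutions_dist_le[OF is_solution_trajectory is_solution_trajectory L _ assms])
      show "trajectory x \<tau> \<in> cball 0 (orbit_radius r) \<and> trajectory y \<tau> \<in> cball 0 (orbit_radius r)"
        if "0 \<le> \<tau>" for \<tau>
        using that \<open>x \<in> cball 0 r\<close> \<open>y \<in> cball 0 r\<close>
        by (auto intro!: norm_solution_le_orbit_radius[OF is_solution_trajectory])
    qed
    then have "norm (trajectory x t - trajectory y t) \<le> sqrt ((norm (x - y))^2 * exp ((2 * L + 1) * t))"
      by (rule real_le_rsqrt)
    then show ?thesis
      using assms by (simp add: semiflow_eq_trajectory dist_norm real_sqrt_mult mult.commute)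
  qed
  then show ?thesis
    by (intro exI lipschitz_onI) auto
qed

lemma continuous_on_semiflow:
  assumes "0 \<le> t"
  shows "continuous_on UNIV (semiflow F t)"
proof (rule continuous_at_imp_continuous_on, intro ballI)
  fix x :: 'a
  obtain C where "C-lipschitz_on (cball 0 (norm x + 1)) (semiflow F t)"
    using semiflow_lipschitz_on_cball[OF assms] by blast
  then have "continuous_on (cball 0 (norm x + 1)) (semiflow F t)"
    by (rule lipschitz_on_continuous_on)
  moreover have "x \<in> interior (cball 0 (norm x + 1))"
    by simp
  ultimately show "isCont (semiflow F t) x"
    by (rule continuous_on_interior)
qed

lemma eventually_Z_semiflow_le:
  assumes "bounded D" "0 < \<delta>"
  shows "\<exists>T\<ge>0. \<forall>t\<ge>T. \<forall>x\<in>D. Z (semiflow F t x) \<le> K / \<mu> + \<delta>"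
proof -
  obtain r where r: "\<And>x. x \<in> D \<Longrightarrow> norm x \<le> r"
    using \<open>bounded D\<close> unfolding bounded_iff by blast
  define M where "M = c2 * r^2"
  have Z_le_M: "Z x \<le> M" if "x \<in> D" for x
  proof -
    have "Z x \<le> c2 * (norm x)^2"
      by (rule Z_upper)
    also have "\<dots> \<le> M"
      unfolding M_def using r[OF that] c1_pos c1_le_c2 by (intro mult_left_mono power_mono) auto
    finally show ?thesis .
  qed
  have "0 \<le> M"
    unfolding M_def using c1_pos c1_le_c2 by simp
  define T where "T = max 0 (ln ((M + 1) / \<delta>) / \<mu>)"
  have "Z (semiflow F t x) \<le> K / \<mu> + \<delta>" if "T \<le> t" "x \<in> D" for t x
  proof -
    have "0 \<le> t"
      using that by (simp add: T_def)
    have "ln ((M + 1) / \<delta>) \<le> \<mu> * t"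
      using that \<mu>_pos by (simp add: T_def field_simps)
    then have "exp (- \<mu> * t) \<le> exp (- ln ((M + 1) / \<delta>))"
      by simp
    also have "\<dots> = \<delta> / (M + 1)"
      using \<open>0 \<le> M\<close> \<open>0 < \<delta>\<close> by (simp add: exp_minus)
    finally have "Z x * exp (- \<mu> * t) \<le> M * (\<delta> / (M + 1))"
      using Z_le_M[OF \<open>x \<in> D\<close>] Z_nonneg \<open>0 \<le> M\<close> by (intro mult_mono) auto
    also have "\<dots> \<le> \<delta>"
      using \<open>0 \<le> M\<close> \<open>0 < \<delta>\<close> by (simp add: field_simps)
    finally show ?thesis
      using solution_Z_decay[OF is_solution_trajectory \<open>0 \<le> t\<close>, of x] \<open>0 \<le> t\<close>
      by (simp add: semiflow_eq_trajectory)
  qed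
  moreover have "0 \<le> T"
    by (simp add: T_def)
  ultimately show ?thesis
    by blast
qed

theorem absorbing_ball:
  assumes "bounded D"
  shows "\<exists>T\<ge>0. \<forall>t>T. semiflow F t ` D \<subseteq> {x. (norm x)^2 \<le> 1 + K / (\<mu> * c1)}"
proof -
  obtain T where "0 \<le> T" and T: "\<And>t x. T \<le> t \<Longrightarrow> x \<in> D \<Longrightarrow> Z (semiflow F t x) \<le> K / \<mu> + c1"
    using eventually_Z_semiflow_le[OF assms c1_pos] by blast
  have "(norm (semiflow F t x))^2 \<le> 1 + K / (\<mu> * c1)" if "T < t" "x \<in> D" for t x
  proof -
    have "c1 * (norm (semiflow F t x))^2 \<le> K / \<mu> + c1"
      using order_trans[OF Z_lower T[OF less_imp_le[OF that(1)] that(2)]] .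
    then show ?thesis
      using c1_pos \<mu>_pos by (simp add: field_simps)
  qed
  with \<open>0 \<le> T\<close> show ?thesis
    by blast
qed

sublocale dissipative_semiflow "semiflow F" "{x. Z x \<le> K / \<mu> + 1}"
proof
  show "semiflow F (s + t) x = semiflow F t (semiflow F s x)" if "0 \<le> s" "0 \<le> t" for s t x
    using that by (rule semiflow_add)
  show "continuous_on UNIV (semiflow F t)" if "0 \<le> t" for t
    using that by (rule continuous_on_semiflow)
  show "\<exists>T\<ge>0. \<forall>t\<ge>T. semiflow F t ` D \<subseteq> {x. Z x \<le> K / \<mu> + 1}" if "bounded D" for D
    using eventually_Z_semiflow_le[OF that zero_less_one] by blast
  define r where "r = sqrt ((K / \<mu> + 1) / c1)"
  have "(\<Union>t\<in>{0..}. semiflow F t ` {x. Z x \<le> K / \<mu> + 1}) \<subseteq> cball 0 (orbit_radius r)"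
  proof (intro UN_least image_subsetI)
    fix t :: real and x assume "t \<in> {0..}" "x \<in> {x. Z x \<le> K / \<mu> + 1}"
    then show "semiflow F t x \<in> cball 0 (orbit_radius r)"
      using norm_semiflow_le[OF norm_le_of_Z_le] by (simp add: r_def)
  qed
  then show "bounded (\<Union>t\<in>{0..}. semiflow F t ` {x. Z x \<le> K / \<mu> + 1})"
    by (rule bounded_subset[OF bounded_cball])
qed

end

section \<open>The neural field model\<close>

lemma lipschitz_on_balls_nn_field:
  fixes a :: "real^'n::finite" and w :: "real^'n^'n"
  assumes f_lip: "\<forall>i. loc_lipschitz (f i)" and phi_lip: "\<forall>i. loc_lipschitz (\<phi> i)"
  shows "lipschitz_on_balls (nn_field a w f k \<phi> J P r V \<gamma> b)"
proof -
  have u: "lipschitz_on_balls (\<lambda>g::(real^'n) \<times> real. fst g $ j)" for j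
    by (intro lipschitz_on_balls_bounded_linear bounded_linear_compose[OF bounded_linear_vec_nth bounded_linear_fst])
  have \<rho>: "lipschitz_on_balls (\<lambda>g::(real^'n) \<times> real. snd g)"
    by (intro lipschitz_on_balls_bounded_linear bounded_linear_snd)
  have f: "lipschitz_on_balls (\<lambda>g::(real^'n) \<times> real. f j (fst g $ j))" for j
    using lipschitz_on_balls_compose[OF lipschitz_on_balls_loc_lipschitz u] f_lip by blast
  have \<phi>: "lipschitz_on_balls (\<lambda>g::(real^'n) \<times> real. \<phi> i (snd g))" for i
    using lipschitz_on_balls_compose[OF lipschitz_on_balls_loc_lipschitz \<rho>] phi_lip by blast
  have \<Gamma>: "lipschitz_on_balls (\<lambda>g::(real^'n) \<times> real. Gam r V (fst g $ j))" for j
    by (rule lipschitz_on_balls_compose[OF lipschitz_on_balls_Gam u])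
  note rules = lipschitz_on_balls_add lipschitz_on_balls_diff lipschitz_on_balls_mult
    lipschitz_on_balls_sum lipschitz_on_balls_const u \<rho> f \<phi> \<Gamma>
  have "lipschitz_on_balls (\<lambda>g. fst (nn_field a w f k \<phi> J P r V \<gamma> b g) $ i)" for i
    unfolding nn_field_def Let_def vec_lambda_beta fst_conv by (intro rules)
  moreover have "lipschitz_on_balls (\<lambda>g. snd (nn_field a w f k \<phi> J P r V \<gamma> b g))"
    unfolding nn_field_def Let_def snd_conv by (intro rules)
  ultimately have "lipschitz_on_balls (\<lambda>g. (fst (nn_field a w f k \<phi> J P r V \<gamma> b g), snd (nn_field a w f k \<phi> J P r V \<gamma> b g)))"
    by (rule lipschitz_on_balls_Pair[OF lipschitz_on_balls_vec])
  then show ?thesis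
    by simp
qed

lemma sum_abs_young:
  fixes u :: "real^'n::finite"
  assumes "0 < \<alpha>"
  shows "2 * e * (\<Sum>i\<in>UNIV. \<bar>u$i\<bar>) \<le> \<alpha> * (u \<bullet> u) + real CARD('n) * e^2 / \<alpha>"
proof -
  define s where "s = (\<Sum>i\<in>UNIV. \<bar>u$i\<bar>)"
  define m where "m = real CARD('n)"
  have "0 < m"
    by (simp add: m_def)
  have "s^2 \<le> m * (u \<bullet> u)"
    using sum_squared_le_sum_of_squares[of "\<lambda>i. \<bar>u$i\<bar>" UNIV]
    by (simp add: s_def m_def inner_vec_def power2_eq_square mult.commute)
  have "2 * e * s * (\<alpha> * m) \<le> \<alpha>^2 * s^2 + m^2 * e^2"
    using zero_le_power2[of "\<alpha> * s - m * e"] by (simp add: power2_eq_square algebra_simps)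
  also have "\<dots> \<le> \<alpha>^2 * (m * (u \<bullet> u)) + m^2 * e^2"
    using \<open>s^2 \<le> m * (u \<bullet> u)\<close> by (intro add_right_mono mult_left_mono) auto
  also have "\<dots> = (\<alpha> * (u \<bullet> u) + m * e^2 / \<alpha>) * (\<alpha> * m)"
    using assms by (simp add: field_simps power2_eq_square)
  finally show ?thesis
    using assms \<open>0 < m\<close> by (simp add: s_def m_def)
qed

lemma min_inverse_weight_le:
  fixes C b X y :: real
  assumes "0 < C" "0 < b" "0 \<le> X"
  shows "b * min (1 / C) 1 * (C * X + y * y) \<le> b * X + b * y^2"
proof -
  have "(b * X) * (min (1 / C) 1 * C) \<le> (b * X) * 1"
    using assms by (intro mult_left_mono) (auto simp: min_def field_simps)
  moreover have "b * min (1 / C) 1 * (y * y) \<le> b * y^2"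
    using assms by (simp add: mult_left_le power2_eq_square mult_right_mono)
  ultimately show ?thesis
    by (simp add: algebra_simps)
qed

context
  fixes a :: "real^'n::finite" and w :: "real^'n^'n" and f \<phi> :: "'n \<Rightarrow> real \<Rightarrow> real"
    and J \<gamma> \<eta> :: "real^'n" and k b \<beta> P r V \<alpha> W Jm gsq :: real
  assumes k_nonneg: "0 \<le> k" and P_nonneg: "0 \<le> P" and b_pos: "0 < b" and \<alpha>_pos: "0 < \<alpha>"
    and a_ge: "\<forall>i. \<alpha> \<le> a$i - k"
    and f_bound: "\<forall>i s. \<bar>f i s\<bar> \<le> \<beta>"
    and phi_eq: "\<forall>i s. \<phi> i s = 1 - \<eta>$i * s^2" and eta_nonneg: "\<forall>i. 0 \<le> \<eta>$i"
    and w_bound: "\<forall>i j. \<bar>w$i$j\<bar> \<le> W" and J_bound: "\<forall>i. \<bar>J$i\<bar> \<le> Jm"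
    and gamma_bound: "\<forall>i. (\<gamma>$i)^2 \<le> gsq"
begin

lemma nn_field_fst_component_le:
  "u$i * fst (nn_field a w f k \<phi> J P r V \<gamma> b (u, \<rho>)) $ i
     \<le> - \<alpha> * (u$i)^2 + \<bar>u$i\<bar> * (real CARD('n) * W * \<beta> + Jm)"
proof -
  define S where "S = (\<Sum>j\<in>UNIV. w$i$j * f j (u$j)) + J$i"
  define G where "G = (\<Sum>j\<in>UNIV. Gam r V (u$j))"
  have "0 \<le> W"
    using order_trans[OF abs_ge_zero] w_bound by blast
  then have "\<bar>\<Sum>j\<in>UNIV. w$i$j * f j (u$j)\<bar> \<le> (\<Sum>j\<in>(UNIV::'n set). W * \<beta>)"
    using w_bound f_bound by (intro order_trans[OF sum_abs] sum_mono) (simp add: abs_mult mult_mono)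
  then have "\<bar>S\<bar> \<le> real CARD('n) * W * \<beta> + Jm"
    unfolding S_def using J_bound[rule_format, of i] abs_triangle_ineq[of "\<Sum>j\<in>UNIV. w$i$j * f j (u$j)" "J$i"]
    by simp
  then have "\<bar>u$i\<bar> * \<bar>S\<bar> \<le> \<bar>u$i\<bar> * (real CARD('n) * W * \<beta> + Jm)"
    by (rule mult_left_mono) simp
  moreover have "u$i * S \<le> \<bar>u$i\<bar> * \<bar>S\<bar>"
    by (simp add: abs_mult[symmetric])
  moreover have "0 \<le> G"
    unfolding G_def Gam_def by (intro sum_nonneg) (simp add: add_pos_pos less_imp_le)
  then have "0 \<le> P * G * (u$i)^2 + k * \<eta>$i * \<rho>^2 * (u$i)^2"
    using P_nonneg k_nonneg eta_nonneg by simp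
  moreover have "\<alpha> * (u$i)^2 \<le> (a$i - k) * (u$i)^2"
    using a_ge by (simp add: mult_right_mono)
  moreover have "u$i * fst (nn_field a w f k \<phi> J P r V \<gamma> b (u, \<rho>)) $ i
      = - (a$i - k) * (u$i)^2 + u$i * S - (P * G * (u$i)^2 + k * \<eta>$i * \<rho>^2 * (u$i)^2)"
    by (simp add: nn_field_def S_def G_def phi_eq power2_eq_square algebra_simps)
  ultimately show ?thesis
    by linarith
qed

lemma nn_field_fst_inner_le:
  "u \<bullet> fst (nn_field a w f k \<phi> J P r V \<gamma> b (u, \<rho>))
     \<le> - \<alpha> * (u \<bullet> u) + (real CARD('n) * W * \<beta> + Jm) * (\<Sum>i\<in>UNIV. \<bar>u$i\<bar>)"
proof -
  have "u \<bullet> fst (nn_field a w f k \<phi> J P r V \<gamma> b (u, \<rho>))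
      \<le> (\<Sum>i\<in>UNIV. - \<alpha> * (u$i)^2 + \<bar>u$i\<bar> * (real CARD('n) * W * \<beta> + Jm))"
    unfolding inner_vec_def inner_real_def by (rule sum_mono, rule nn_field_fst_component_le)
  also have "\<dots> = (\<Sum>i\<in>UNIV. - \<alpha> * (u$i)^2) + (\<Sum>i\<in>UNIV. \<bar>u$i\<bar> * (real CARD('n) * W * \<beta> + Jm))"
    by (rule sum.distrib)
  also have "\<dots> = - \<alpha> * (u \<bullet> u) + (real CARD('n) * W * \<beta> + Jm) * (\<Sum>i\<in>UNIV. \<bar>u$i\<bar>)"
    unfolding sum_distrib_left[symmetric] sum_distrib_right[symmetric]
    by (simp add: inner_vec_def power2_eq_square mult.commute)
  finally show ?thesis .
qed

lemma nn_field_snd_le: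
  "2 * \<rho> * snd (nn_field a w f k \<phi> J P r V \<gamma> b (u, \<rho>))
     \<le> - b * \<rho>^2 + real CARD('n) * gsq * (u \<bullet> u) / b"
proof -
  define g where "g = (\<Sum>i\<in>UNIV. \<gamma>$i * u$i)"
  have "u \<bullet> u = (\<Sum>i\<in>UNIV. (u$i)^2)"
    by (simp add: inner_vec_def power2_eq_square)
  then have "g^2 \<le> (\<Sum>i\<in>UNIV. (\<gamma>$i)^2) * (u \<bullet> u)"
    using Cauchy_Schwarz_ineq_sum[of "\<lambda>i. \<gamma>$i" "\<lambda>i. u$i" UNIV] by (simp add: g_def)
  also have "\<dots> \<le> real CARD('n) * gsq * (u \<bullet> u)"
    using gamma_bound sum_bounded_above[of UNIV "\<lambda>i. (\<gamma>$i)^2" gsq]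
    by (intro mult_right_mono) auto
  finally have "g^2 / b \<le> real CARD('n) * gsq * (u \<bullet> u) / b"
    using b_pos by (simp add: divide_right_mono)
  moreover have "2 * \<rho> * g \<le> b * \<rho>^2 + g^2 / b"
    using zero_le_power2[of "b * \<rho> - g"] b_pos by (simp add: field_simps power2_eq_square)
  ultimately show ?thesis
    by (simp add: nn_field_def g_def algebra_simps power2_eq_square)
qed


lemma nn_field_dissipation:
  fixes C1 C2 \<mu> :: real
  defines "C1 \<equiv> 1 / \<alpha> * (real CARD('n) * gsq / b + b)"
    and "C2 \<equiv> (real CARD('n) * gsq / b + b) * (real CARD('n) * (real CARD('n) * W * \<beta> + Jm)^2 / \<alpha>^2)"
    and "\<mu> \<equiv> b * min (1 / C1) 1"
  shows "2 * C1 * (u \<bullet> fst (nn_field a w f k \<phi> J P r V \<gamma> b (u, \<rho>)))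
           + 2 * \<rho> * snd (nn_field a w f k \<phi> J P r V \<gamma> b (u, \<rho>))
         \<le> - \<mu> * (C1 * (u \<bullet> u) + \<rho> * \<rho>) + C2"
proof -
  define m where "m = real CARD('n)"
  define e where "e = m * W * \<beta> + Jm"
  define X where "X = u \<bullet> u"
  have "0 \<le> gsq"
    using order_trans[OF zero_le_power2] gamma_bound by blast
  then have "0 < C1"
    unfolding C1_def using \<alpha>_pos b_pos by (simp add: add_nonneg_pos)
  have C1_\<alpha>: "C1 * \<alpha> = m * gsq / b + b"
    unfolding C1_def m_def using \<alpha>_pos by simp
  have C2_eq: "C2 = C1 * (m * e^2 / \<alpha>)"
    unfolding C2_def C1_def m_def e_def using \<alpha>_pos by (simp add: power2_eq_square field_simps)
  have "2 * C1 * (u \<bullet> fst (nn_field a w f k \<phi> J P r V \<gamma> b (u, \<rho>)))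
      \<le> 2 * C1 * (- \<alpha> * X + e * (\<Sum>i\<in>UNIV. \<bar>u$i\<bar>))"
    using nn_field_fst_inner_le[of u \<rho>] \<open>0 < C1\<close> by (simp add: X_def e_def m_def)
  also have "\<dots> \<le> 2 * C1 * (- \<alpha> * X) + C1 * (\<alpha> * X + m * e^2 / \<alpha>)"
  proof -
    have "C1 * (2 * e * (\<Sum>i\<in>UNIV. \<bar>u$i\<bar>)) \<le> C1 * (\<alpha> * X + m * e^2 / \<alpha>)"
      using sum_abs_young[OF \<alpha>_pos, of e u] \<open>0 < C1\<close> by (intro mult_left_mono) (auto simp: X_def m_def)
    then show ?thesis
      by (simp add: algebra_simps)
  qed
  also have "\<dots> = - (m * gsq / b + b) * X + C2"
    unfolding C2_eq C1_\<alpha>[symmetric] by (simp add: algebra_simps)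
  finally have "2 * C1 * (u \<bullet> fst (nn_field a w f k \<phi> J P r V \<gamma> b (u, \<rho>)))
      + 2 * \<rho> * snd (nn_field a w f k \<phi> J P r V \<gamma> b (u, \<rho>)) \<le> - b * X - b * \<rho>^2 + C2"
    using nn_field_snd_le[of \<rho> u] b_pos by (simp add: X_def m_def algebra_simps add_divide_distrib)
  also have "\<dots> \<le> - \<mu> * (C1 * X + \<rho> * \<rho>) + C2"
    using min_inverse_weight_le[OF \<open>0 < C1\<close> b_pos, of X \<rho>] by (simp add: \<mu>_def X_def)
  finally show ?thesis
    by (simp add: X_def)
qed


lemma nn_field_lyapunov_dissipative:
  fixes C1 C2 \<mu> :: real
  assumes "\<forall>i. loc_lipschitz (f i)" "\<forall>i. loc_lipschitz (\<phi> i)"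
  defines "C1 \<equiv> 1 / \<alpha> * (real CARD('n) * gsq / b + b)"
    and "C2 \<equiv> (real CARD('n) * gsq / b + b) * (real CARD('n) * (real CARD('n) * W * \<beta> + Jm)^2 / \<alpha>^2)"
    and "\<mu> \<equiv> b * min (1 / C1) 1"
  shows "lyapunov_dissipative (nn_field a w f k \<phi> J P r V \<gamma> b)
           (\<lambda>g. C1 * (fst g \<bullet> fst g) + snd g * snd g) (\<lambda>g h. 2 * C1 * (fst g \<bullet> fst h) + 2 * snd g * snd h)
           \<mu> C2 (min C1 1) (max C1 1)"
proof
  have "0 \<le> gsq"
    using order_trans[OF zero_le_power2] gamma_bound by blast
  then show "0 < min C1 1"
    unfolding C1_def using \<alpha>_pos b_pos by (simp add: add_nonneg_pos)
  then show "0 < \<mu>"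
    unfolding \<mu>_def using b_pos by simp
  show "0 \<le> C2"
    unfolding C2_def using \<open>0 \<le> gsq\<close> b_pos by (simp add: add_nonneg_pos)
  show "lipschitz_on_balls (nn_field a w f k \<phi> J P r V \<gamma> b)"
    using assms(1,2) by (rule lipschitz_on_balls_nn_field)
  fix x :: "(real^'n) \<times> real"
  show "((\<lambda>g. C1 * (fst g \<bullet> fst g) + snd g * snd g) has_derivative
          (\<lambda>h. 2 * C1 * (fst x \<bullet> fst h) + 2 * snd x * snd h)) (at x)"
    by (auto intro!: derivative_eq_intros simp: inner_commute algebra_simps)
  show "2 * C1 * (fst x \<bullet> fst (nn_field a w f k \<phi> J P r V \<gamma> b x))
          + 2 * snd x * snd (nn_field a w f k \<phi> J P r V \<gamma> b x)
        \<le> - \<mu> * (C1 * (fst x \<bullet> fst x) + snd x * snd x) + C2"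
    using nn_field_dissipation[of "fst x" "snd x"] by (simp add: C1_def C2_def \<mu>_def)
  have norm_sq: "(norm x)^2 = fst x \<bullet> fst x + snd x * snd x"
    by (simp add: power2_norm_eq_inner inner_prod_def)
  have "min C1 1 * (fst x \<bullet> fst x) \<le> C1 * (fst x \<bullet> fst x)"
    and "min C1 1 * (snd x * snd x) \<le> 1 * (snd x * snd x)"
    and "C1 * (fst x \<bullet> fst x) \<le> max C1 1 * (fst x \<bullet> fst x)"
    and "1 * (snd x * snd x) \<le> max C1 1 * (snd x * snd x)"
    by (intro mult_right_mono; simp)+
  then show "min C1 1 * (norm x)^2 \<le> C1 * (fst x \<bullet> fst x) + snd x * snd x"
    and "C1 * (fst x \<bullet> fst x) + snd x * snd x \<le> max C1 1 * (norm x)^2"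
    unfolding norm_sq distrib_left by simp_all
qed

end

theorem theorem2p2:
  fixes a :: "real^'n::finite" and w :: "real^'n^'n"
    and f \<phi> :: "'n \<Rightarrow> real \<Rightarrow> real"
    and J \<gamma> \<eta> :: "real^'n"
    and k b \<beta> P r V :: real
  assumes m2: "CARD('n) \<ge> 2"
    and r_pos: "r > 0" and P_pos: "P > 0"
    and a_pos: "\<forall>i. a$i > 0" and b_pos: "b > 0" and beta_pos: "\<beta> > 0"
    and eta_pos: "\<forall>i. \<eta>$i > 0" and k_pos: "k > 0"
    and f_lip: "\<forall>i. loc_lipschitz (f i)" and phi_lip: "\<forall>i. loc_lipschitz (\<phi> i)"
    and a_gt_k: "\<forall>i. a$i > k"
    and f_bd: "\<forall>i s. \<bar>f i s\<bar> \<le> \<beta>"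
    and phi_def: "\<forall>i s. \<phi> i s = 1 - \<eta>$i * s^2"
  defines "F \<equiv> nn_field a w f k \<phi> J P r V \<gamma> b"
    and "m \<equiv> real CARD('n)"
    and "amin \<equiv> Min (range (\<lambda>i. a$i))"
    and "W \<equiv> Max {\<bar>w$i$j\<bar> | i j. True}"
    and "Jm \<equiv> Max (range (\<lambda>i. \<bar>J$i\<bar>))"
    and "gsq \<equiv> Max (range (\<lambda>i. (\<gamma>$i)^2))"
  shows "let C1 = (1 / (amin - k)) * (m * gsq / b + b);
              C2 = (m * gsq / b + b) * (m * (m * W * \<beta> + Jm)^2 / (amin - k)^2);
              \<mu> = b * min (1 / C1) 1;
              Q = 1 + C2 / (\<mu> * min C1 1);
              Bstar = {g :: (real^'n) \<times> real. (norm g)^2 \<le> Q}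
         in (\<forall>x0. \<exists>g. is_solution F x0 g)
       \<and> (\<forall>x0 g1 g2. is_solution F x0 g1 \<longrightarrow> is_solution F x0 g2 \<longrightarrow> (\<forall>t\<ge>0. g1 t = g2 t))
       \<and> (\<forall>B. bounded B \<longrightarrow> (\<exists>T\<ge>0. \<forall>t>T. semiflow F t ` B \<subseteq> Bstar))
       \<and> (\<exists>A. global_attractor (semiflow F) A)"
proof -
  have "finite (range (\<lambda>i. a$i))"
    by simp
  then have amin: "\<forall>i. amin - k \<le> a$i - k" "0 < amin - k"
    using a_gt_k Min_in[of "range (\<lambda>i. a$i)"] by (auto simp: amin_def)
  have "finite {\<bar>w$i$j\<bar> | i j. True}"
    using finite_image_set2[of "\<lambda>_. True" "\<lambda>_. True" "\<lambda>i j. \<bar>w$i$j\<bar>"] by simp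
  then have W: "\<forall>i j. \<bar>w$i$j\<bar> \<le> W"
    unfolding W_def by (blast intro: Max_ge)
  have Jm: "\<forall>i. \<bar>J$i\<bar> \<le> Jm" and gsq: "\<forall>i. (\<gamma>$i)^2 \<le> gsq"
    by (simp_all add: Jm_def gsq_def)
  define C1 where "C1 = 1 / (amin - k) * (m * gsq / b + b)"
  define C2 where "C2 = (m * gsq / b + b) * (m * (m * W * \<beta> + Jm)^2 / (amin - k)^2)"
  define \<mu> where "\<mu> = b * min (1 / C1) 1"
  interpret lyapunov_dissipative F "\<lambda>g. C1 * (fst g \<bullet> fst g) + snd g * snd g"
    "\<lambda>g h. 2 * C1 * (fst g \<bullet> fst h) + 2 * snd g * snd h" \<mu> C2 "min C1 1" "max C1 1"
    unfolding F_def C1_def C2_def \<mu>_def m_def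
    using k_pos P_pos b_pos amin f_bd phi_def eta_pos W Jm gsq f_lip phi_lip
    by (intro nn_field_lyapunov_dissipative) (auto intro: less_imp_le)
  show ?thesis
    unfolding Let_def C1_def[symmetric] C2_def[symmetric] \<mu>_def[symmetric]
    using solution_exists solution_unique absorbing_ball global_attractor_omega_limit
    by blast
qed

end
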